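(* Let $q\ge 2$, $r\ge 2$ and $t,s\ge 0$ be integers. Then $$\max_{\substack{\mathbf{x}_1,\mathbf{x}_2\in J_r^*\\ \mathbf{x}_1\neq \mathbf{x}_2}} \bigl|\mathcal{B}_{t,s}(\mathbf{x}_1)\cap \mathcal{B}_{t,s}(\mathbf{x}_2)\bigr| \;+\;1 \;=\; M,\qquad\text{where}\quad M=\sum_{i=1}^{t} A_{t-i,s}(r-1)+\sum_{i=1}^{s} A_{t,s-i}(r-1)+1 .$$ Equivalently, $M$ is the minimum number $N$ such that any $N$ distinct sequences lying in $\mathcal{B}_{t,s}(\mathbf{x})$ for some $\mathbf{x}\in J_r^*$ determine $\mathbf{x}$ uniquely, i.e. $M$ is the minimum number of distinct outputs of the $(t,s)$-sticky-insdel channel required to uniquely reconstruct the transmitted sequence.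
   Context: Let $\Sigma_q=\{0,1,\dots,q-1\}$ and $\Sigma_q^*$ the set of finite strings over $\Sigma_q$. Every $\mathbf{x}\in\Sigma_q^*$ can be written uniquely as $\mathbf{x}=c_1^{u_1}c_2^{u_2}\cdots c_r^{u_r}$ with $c_i\neq c_{i+1}$ and $u_i\ge 1$ (runs); $r$ is the number of runs and $J_r^*$ is the set of strings with exactly $r$ runs. Write $\Psi(\mathbf{x})=(\mathbf{c},\mathbf{u})$ with $\mathbf{c}=c_1\cdots c_r$, $\mathbf{u}=(u_1,\dots,u_r)\in\mathbb{Z}_+^r$; $\Psi$ is a bijection from $J_r^*$ onto pairs of such $\mathbf{c}$ and $\mathbf{u}\in\mathbb{Z}_+^r$. A sticky insertion duplicates a symbol within its run (increases one run length by one); a sticky deletion deletes a symbol from a run of length at least 2. The sticky-insdel ball $\mathcal{B}_{t,s}(\mathbf{x})$ is the set of sequences obtainable from $\mathbf{x}$ by at most $t$ sticky insertions and at most $s$ sticky deletions; equivalently, if $\Psi(\mathbf{x})=(\mathbf{c},\mathbf{u})$, then $\mathbf{y}\in\mathcal{B}_{t,s}(\mathbf{x})$ iff $\Psi(\mathbf{y})=(\mathbf{c},\mathbf{v})$ with $\mathbf{v}\in\mathbb{Z}_+^r$, $\sum_{i=1}^r\max\{0,u_i-v_i\}\le s$ and $\sum_{i=1}^r\max\{0,v_i-u_i\}\le t$. The numbers $A_{t,s}(r)$ (for integers $t,s$ and $r\ge1$) are defined by: $A_{t,s}(r)=0$ if $t<0$ or $s<0$; $A_{t,s}(1)=t+s+1$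 for $t,s\ge0$; and for $r\ge 2$, $t,s\ge 0$: $A_{t,s}(r)=\sum_{i=1}^{t}A_{t-i,s}(r-1)+\sum_{i=1}^{s}A_{t,s-i}(r-1)+A_{t,s}(r-1)$. *)

theory Defs
  imports Main
begin

fun runs :: "nat list \<Rightarrow> (nat \<times> nat) list" where
  "runs [] = []"
| "runs (a # xs) =
     (case runs xs of
        [] \<Rightarrow> [(a, 1)]
      | (b, n) # rs \<Rightarrow> (if a = b then (a, Suc n) # rs else (a, 1) # (b, n) # rs))"

definition Psi :: "nat list \<Rightarrow> nat list \<times> nat list" where
  "Psi x = (map fst (runs x), map snd (runs x))"

definition Sigma_star :: "nat \<Rightarrow> nat list set" where
  "Sigma_star q = {x. set x \<subseteq> {..<q}}"

definition J_star :: "nat \<Rightarrow> nat \<Rightarrow> nat list set" where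
  "J_star q r = {x \<in> Sigma_star q. length (runs x) = r}"

text \<open>Sticky-insdel ball, via the run-length characterization:
  same run symbols, total decrease of run lengths at most s,
  total increase at most t (nat subtraction = max 0 (_ - _)).\<close>
definition sticky_ball :: "nat \<Rightarrow> nat \<Rightarrow> nat list \<Rightarrow> nat list set" where
  "sticky_ball t s x = {y. fst (Psi y) = fst (Psi x) \<and>
      (\<Sum>i<length (runs x). snd (Psi x) ! i - snd (Psi y) ! i) \<le> s \<and>
      (\<Sum>i<length (runs x). snd (Psi y) ! i - snd (Psi x) ! i) \<le> t}"

text \<open>A_{t,s}(r) for t,s >= 0 and r >= 1 (the value at r = 0 is irrelevant).
  Negative indices never occur in the recursion as written with i ranging
  over 1..t resp. 1..s.\<close>
fun A :: "nat \<Rightarrow> nat \<Rightarrow> nat \<Rightarrow> nat" where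
  "A t s 0 = 0"
| "A t s (Suc 0) = t + s + 1"
| "A t s (Suc (Suc r)) =
     (\<Sum>i=1..t. A (t - i) s (Suc r)) + (\<Sum>i=1..s. A t (s - i) (Suc r)) + A t s (Suc r)"

end

theory Submission
  imports Defs
begin

(*
  Sticky balls of strings with different run symbols are disjoint, and for equal run symbols
  everything is governed by run-length vectors: y lies in the ball of x iff the difference of
  their run-length vectors lies in E_r, the set of integer vectors of length r whose positive
  parts sum to at most t and whose negative parts sum to at most s. Hence the intersection of
  the balls of x1 and x2 injects into the set of d in E_r with d + w in E_r, where w = u1 - u2
  is nonzero. On every line in direction w that meets E_r, the last point in E_r leaves E_r
  under the step d -> d + w; the lines through the points of E_(r-1), lifted by a zero at a
  coordinate where w does not vanish, are pairwise distinct, so at least |E_(r-1)| points leave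
  and the intersection has at most |E_r| - |E_(r-1)| elements. For w the first unit vector a
  leaving point is determined by its tail, so at most |E_(r-1)| points leave; with run lengths
  (s+2, s+1, ..., s+1) and (s+1, ..., s+1) every d in E_r is realised by positive run lengths,
  and the bound is attained. Finally |E_r| = A_(t,s)(r) by splitting on the first coordinate.
*)

section \<open>Counting exit points\<close>

lemma card_filter_add_card_filter_not:
  "finite S \<Longrightarrow> card {x \<in> S. P x} + card {x \<in> S. \<not> P x} = card S"
  by (subst card_Un_disjoint[symmetric]) (auto intro: arg_cong[where f = card])

lemma card_le_card_exits:
  fixes line :: "'b \<Rightarrow> nat \<Rightarrow> 'a"
  assumes "finite D"
    and inj: "inj_on (\<lambda>(e, m). line e m) (X \<times> UNIV)"
    and start: "\<And>e. e \<in> X \<Longrightarrow> line e 0 \<in> D"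
    and step: "\<And>e m. e \<in> X \<Longrightarrow> line e (Suc m) = f (line e m)"
  shows "card X \<le> card {d \<in> D. f d \<notin> D}"
proof -
  define last_in where "last_in e = Max {m. line e m \<in> D}" for e
  have last_in: "line e (last_in e) \<in> D \<and> line e (Suc (last_in e)) \<notin> D" if "e \<in> X" for e
  proof -
    have "inj (line e)"
      using inj that by (auto simp: inj_on_def)
    then have "finite {m. line e m \<in> D}"
      using finite_vimageI[OF \<open>finite D\<close>] by (simp add: vimage_def)
    moreover have "0 \<in> {m. line e m \<in> D}"
      using start that by simp
    ultimately show ?thesis
      unfolding last_in_def using Max_in Max_ge by (metis Suc_n_not_le_n empty_iff mem_Collect_eq)
  qed
  have "inj_on (\<lambda>e. line e (last_in e)) X"
    using inj by (auto simp: inj_on_def)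
  moreover have "(\<lambda>e. line e (last_in e)) ` X \<subseteq> {d \<in> D. f d \<notin> D}"
    using last_in step by auto
  ultimately show ?thesis
    by (rule card_inj_on_le) (simp add: \<open>finite D\<close>)
qed

section \<open>Run-length encoding\<close>

definition of_runs :: "(nat \<times> nat) list \<Rightarrow> nat list" where
  "of_runs rs = concat (map (\<lambda>(a, n). replicate n a) rs)"

lemma of_runs_runs [simp]: "of_runs (runs x) = x"
proof (induction x)
  case (Cons a xs)
  then show ?case
    by (cases "runs xs") (auto simp: of_runs_def split: prod.splits)
qed (simp add: of_runs_def)

lemma runs_replicate_append:
  assumes "runs ys = [] \<or> fst (hd (runs ys)) \<noteq> a"
  shows "runs (replicate (Suc k) a @ ys) = (a, Suc k) # runs ys"
  using assms by (induction k) (auto split: list.splits prod.splits)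

lemma runs_of_runs:
  assumes "distinct_adj (map fst rs)" and "\<forall>p\<in>set rs. 0 < snd p"
  shows "runs (of_runs rs) = rs"
  using assms
proof (induction rs)
  case (Cons p rs)
  obtain a k where p: "p = (a, Suc k)"
    using Cons.prems(2) by (metis gr0_implies_Suc list.set_intros(1) prod.collapse)
  have "runs (of_runs rs) = rs"
    using Cons by (cases rs) (auto simp: distinct_adj_Cons of_runs_def)
  moreover have "rs = [] \<or> fst (hd rs) \<noteq> a"
    using Cons.prems(1) p by (cases rs) auto
  ultimately show ?case
    using runs_replicate_append[of "of_runs rs" a k] p by (simp add: of_runs_def)
qed (simp add: of_runs_def)

lemma Psi_inject: "Psi x = Psi y \<Longrightarrow> x = y"
  by (metis Psi_def of_runs_runs prod.inject zip_map_fst_snd)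

lemma set_of_runs: "set (of_runs rs) \<subseteq> fst ` set rs"
  by (force simp: of_runs_def split: prod.splits)

section \<open>Edit vectors\<close>

definition insertions :: "int list \<Rightarrow> nat" where
  "insertions d = (\<Sum>x\<leftarrow>d. nat x)"

definition deletions :: "int list \<Rightarrow> nat" where
  "deletions d = (\<Sum>x\<leftarrow>d. nat (- x))"

definition edit_vectors :: "nat \<Rightarrow> nat \<Rightarrow> nat \<Rightarrow> int list set" where
  "edit_vectors r t s = {d. length d = r \<and> insertions d \<le> t \<and> deletions d \<le> s}"

lemma insertions_simps [simp]:
  "insertions [] = 0" "insertions (x # d) = nat x + insertions d"
  "insertions (d @ e) = insertions d + insertions e"
  by (simp_all add: insertions_def)

lemma deletions_simps [simp]:
  "deletions [] = 0" "deletions (x # d) = nat (- x) + deletions d"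
  "deletions (d @ e) = deletions d + deletions e"
  by (simp_all add: deletions_def)

lemma edit_vectors_entry_bounds:
  assumes "d \<in> edit_vectors r t s" and "x \<in> set d"
  shows "- int s \<le> x" and "x \<le> int t"
proof -
  have "nat x \<le> insertions d" "nat (- x) \<le> deletions d"
    using assms(2) unfolding insertions_def deletions_def
    by (simp_all add: member_le_sum_list)
  then show "- int s \<le> x" "x \<le> int t"
    using assms(1) by (auto simp: edit_vectors_def)
qed

lemma finite_edit_vectors: "finite (edit_vectors r t s)"
proof (rule finite_subset)
  show "edit_vectors r t s \<subseteq> {d. set d \<subseteq> {- int s..int t} \<and> length d = r}"
    using edit_vectors_entry_bounds by (fastforce simp: edit_vectors_def)
qed (simp add: finite_lists_length_eq)

lemma edit_vectors_0: "edit_vectors 0 t s = {[]}"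
  by (auto simp: edit_vectors_def)

lemma edit_vectors_Suc:
  "edit_vectors (Suc r) t s =
     (\<Union>i\<in>{1..t}. (#) (int i) ` edit_vectors r (t - i) s) \<union>
     (\<Union>i\<in>{1..s}. (#) (- int i) ` edit_vectors r t (s - i)) \<union>
     (#) 0 ` edit_vectors r t s" (is "?E = ?P \<union> ?N \<union> ?Z")
proof
  show "?E \<subseteq> ?P \<union> ?N \<union> ?Z"
  proof
    fix d assume "d \<in> ?E"
    then obtain x e where d: "d = x # e" and e: "length e = r"
      and ins: "nat x + insertions e \<le> t" and del: "nat (- x) + deletions e \<le> s"
      by (cases d) (auto simp: edit_vectors_def)
    consider "0 < x" | "x < 0" | "x = 0" by linarith
    then show "d \<in> ?P \<union> ?N \<union> ?Z"
    proof cases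
      case 1
      have "nat x \<in> {1..t}"
        using 1 ins by auto
      moreover have "d \<in> (#) (int (nat x)) ` edit_vectors r (t - nat x) s"
        using 1 d e ins del by (auto simp: edit_vectors_def)
      ultimately show ?thesis by blast
    next
      case 2
      have "nat (- x) \<in> {1..s}"
        using 2 del by auto
      moreover have "d \<in> (#) (- int (nat (- x))) ` edit_vectors r t (s - nat (- x))"
        using 2 d e ins del by (auto simp: edit_vectors_def)
      ultimately show ?thesis by blast
    qed (use d e ins del in \<open>auto simp: edit_vectors_def\<close>)
  qed
qed (auto simp: edit_vectors_def)

lemma card_edit_vectors_Suc:
  "card (edit_vectors (Suc r) t s) =
     (\<Sum>i=1..t. card (edit_vectors r (t - i) s)) + (\<Sum>i=1..s. card (edit_vectors r t (s - i))) +
     card (edit_vectors r t s)"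
proof -
  let ?P = "\<Union>i\<in>{1..t}. (#) (int i) ` edit_vectors r (t - i) s"
  let ?N = "\<Union>i\<in>{1..s}. (#) (- int i) ` edit_vectors r t (s - i)"
  let ?Z = "(#) 0 ` edit_vectors r t s"
  have "card ?P = (\<Sum>i=1..t. card (edit_vectors r (t - i) s))"
    by (subst card_UN_disjoint) (auto simp: finite_edit_vectors card_image)
  moreover have "card ?N = (\<Sum>i=1..s. card (edit_vectors r t (s - i)))"
    by (subst card_UN_disjoint) (auto simp: finite_edit_vectors card_image)
  moreover have "card ?Z = card (edit_vectors r t s)"
    by (simp add: card_image)
  moreover have "?P \<inter> ?N = {}" "(?P \<union> ?N) \<inter> ?Z = {}"
    by auto
  then have "card (?P \<union> ?N \<union> ?Z) = card ?P + card ?N + card ?Z"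
    by (simp add: card_Un_disjoint finite_edit_vectors)
  ultimately show ?thesis
    by (simp add: edit_vectors_Suc)
qed

lemma card_edit_vectors: "card (edit_vectors (Suc r) t s) = A t s (Suc r)"
proof (induction r arbitrary: t s)
  case 0
  show ?case by (simp add: card_edit_vectors_Suc edit_vectors_0)
next
  case (Suc r)
  show ?case by (subst card_edit_vectors_Suc) (simp add: Suc.IH)
qed

definition insert_zero :: "nat \<Rightarrow> 'a::zero list \<Rightarrow> 'a list" where
  "insert_zero k e = take k e @ 0 # drop k e"

lemma length_insert_zero [simp]: "k \<le> length e \<Longrightarrow> length (insert_zero k e) = Suc (length e)"
  by (simp add: insert_zero_def)

lemma nth_insert_zero_same [simp]: "k \<le> length e \<Longrightarrow> insert_zero k e ! k = 0"
  by (simp add: insert_zero_def nth_append)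

lemma insert_zero_inject:
  assumes "insert_zero k e = insert_zero k e'" and "k \<le> length e" and "k \<le> length e'"
  shows "e = e'"
proof -
  have "take k (insert_zero k e) @ drop (Suc k) (insert_zero k e) =
      take k (insert_zero k e') @ drop (Suc k) (insert_zero k e')"
    using assms(1) by simp
  with assms(2,3) show ?thesis
    by (simp add: insert_zero_def)
qed

lemma edit_vectors_insert_zero:
  assumes "e \<in> edit_vectors r t s" and "k \<le> r"
  shows "insert_zero k e \<in> edit_vectors (Suc r) t s"
proof -
  have "insertions (insert_zero k e) = insertions e" "deletions (insert_zero k e) = deletions e"
    unfolding insert_zero_def
    by (metis append_take_drop_id insertions_simps deletions_simps add_0 nat_0 minus_zero)+
  with assms show ?thesis
    by (simp add: edit_vectors_def)
qed

lemma card_edit_vectors_le_card_exits: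
  fixes w :: "int list" and r t s :: nat
  assumes w: "length w = Suc r" and k: "k < Suc r" "w ! k \<noteq> 0"
  defines "E \<equiv> edit_vectors (Suc r) t s"
  shows "card (edit_vectors r t s) \<le> card {d \<in> E. map2 (+) d w \<notin> E}"
proof -
  define line where "line e m = map2 (\<lambda>a b. a + int m * b) (insert_zero k e) w" for e m
  have length_line: "length (line e m) = Suc r" if "e \<in> edit_vectors r t s" for e m
    using that k w by (simp add: line_def edit_vectors_def)
  have nth_line: "line e m ! i = insert_zero k e ! i + int m * w ! i"
    if "e \<in> edit_vectors r t s" "i < Suc r" for e m i
    using that k w by (simp add: line_def edit_vectors_def)
  show ?thesis
  proof (rule card_le_card_exits[where line = line])
    show "finite E"
      by (simp add: E_def finite_edit_vectors)
  next
    fix e m assume e: "e \<in> edit_vectors r t s"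
    have "line e 0 = insert_zero k e"
      using e k by (simp add: list_eq_iff_nth_eq length_line nth_line edit_vectors_def)
    then show "line e 0 \<in> E"
      using edit_vectors_insert_zero[OF e] k by (simp add: E_def)
    show "line e (Suc m) = map2 (+) (line e m) w"
      by (rule nth_equalityI) (simp_all add: nth_line[OF e] length_line[OF e] w algebra_simps)
  next
    show "inj_on (\<lambda>(e, m). line e m) (edit_vectors r t s \<times> UNIV)"
    proof (rule inj_onI, clarsimp)
      fix e e' m m'
      assume e: "e \<in> edit_vectors r t s" and e': "e' \<in> edit_vectors r t s"
        and eq: "line e m = line e' m'"
      have len: "length e = r" "length e' = r"
        using e e' by (simp_all add: edit_vectors_def)
      have "int m * w ! k = int m' * w ! k"
        using arg_cong[OF eq, of "\<lambda>v. v ! k"] nth_line[OF e k(1)] nth_line[OF e' k(1)] len k(1)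
        by simp
      with k(2) have "m = m'"
        by simp
      have "insert_zero k e = insert_zero k e'"
      proof (rule nth_equalityI)
        show "length (insert_zero k e) = length (insert_zero k e')"
          using len k(1) by simp
        fix i assume "i < length (insert_zero k e)"
        then show "insert_zero k e ! i = insert_zero k e' ! i"
          using arg_cong[OF eq, of "\<lambda>v. v ! i"] nth_line[OF e] nth_line[OF e'] len k(1) \<open>m = m'\<close>
          by simp
      qed
      with \<open>m = m'\<close> show "e = e' \<and> m = m'"
        using insert_zero_inject[of k e e'] len k(1) by simp
    qed
  qed
qed

lemma card_exits_unit_le_card_edit_vectors:
  fixes r t s :: nat
  defines "E \<equiv> edit_vectors (Suc r) t s"
  shows "card {d \<in> E. map2 (+) d (1 # replicate r 0) \<notin> E} \<le> card (edit_vectors r t s)"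
proof (rule card_inj_on_le[where f = tl])
  have exit: "e \<in> edit_vectors r t s \<and> x = int t - int (insertions e)"
    if "x # e \<in> E" "(x + 1) # e \<notin> E" for x e
  proof -
    have e: "length e = r" "nat x + insertions e \<le> t" "nat (- x) + deletions e \<le> s"
      using that(1) by (simp_all add: E_def edit_vectors_def)
    moreover have "nat (- (x + 1)) \<le> nat (- x)"
      by simp
    ultimately have "t < nat (x + 1) + insertions e"
      using that(2) unfolding E_def edit_vectors_def by fastforce
    with e have "x = int t - int (insertions e)"
      by linarith
    with e show ?thesis
      by (simp add: edit_vectors_def)
  qed
  have map2_unit: "map2 (+) (x # e) (1 # replicate r 0) = (x + 1) # e"
    if "length e = r" for x :: int and e
    using that by (simp add: zip_replicate2 comp_def)
  have exit_tl: "d = (int t - int (insertions (tl d))) # tl d \<and> tl d \<in> edit_vectors r t s"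
    if d: "d \<in> {d \<in> E. map2 (+) d (1 # replicate r 0) \<notin> E}" for d
  proof -
    obtain x e where "d = x # e"
      using d by (cases d) (auto simp: E_def edit_vectors_def)
    moreover have "length e = r"
      using d \<open>d = x # e\<close> by (simp add: E_def edit_vectors_def)
    ultimately show ?thesis
      using d exit[of x e] map2_unit[of e x] by simp
  qed
  show "inj_on tl {d \<in> E. map2 (+) d (1 # replicate r 0) \<notin> E}"
    by (rule inj_on_inverseI[where g = "\<lambda>e. (int t - int (insertions e)) # e"])
      (rule exit_tl[THEN conjunct1, symmetric])
  show "tl ` {d \<in> E. map2 (+) d (1 # replicate r 0) \<notin> E} \<subseteq> edit_vectors r t s"
    by (rule image_subsetI) (rule exit_tl[THEN conjunct2])
qed (simp add: finite_edit_vectors)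

lemma card_edit_vectors_shift_le:
  fixes w :: "int list" and r t s :: nat
  assumes "length w = Suc r" and "k < Suc r" and "w ! k \<noteq> 0"
  defines "E \<equiv> edit_vectors (Suc r) t s"
  shows "card {d \<in> E. map2 (+) d w \<in> E} \<le> card E - card (edit_vectors r t s)"
  using card_edit_vectors_le_card_exits[OF assms(1-3), of t s]
    card_filter_add_card_filter_not[of E "\<lambda>d. map2 (+) d w \<in> E"]
  by (simp add: E_def finite_edit_vectors)

lemma card_edit_vectors_shift_unit:
  fixes r t s :: nat
  defines "E \<equiv> edit_vectors (Suc r) t s"
  shows "card {d \<in> E. map2 (+) d (1 # replicate r 0) \<in> E} = card E - card (edit_vectors r t s)"
  using card_edit_vectors_shift_le[of "1 # replicate r 0" r 0 t s]
    card_exits_unit_le_card_edit_vectors[of r t s]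
    card_filter_add_card_filter_not[of E "\<lambda>d. map2 (+) d (1 # replicate r 0) \<in> E"]
  by (simp add: E_def finite_edit_vectors)

section \<open>Sticky balls\<close>

definition int_diff :: "nat list \<Rightarrow> nat list \<Rightarrow> int list" where
  "int_diff v u = map2 (\<lambda>a b. int a - int b) v u"

lemma length_int_diff [simp]: "length (int_diff v u) = min (length v) (length u)"
  by (simp add: int_diff_def)

lemma nth_int_diff [simp]:
  "i < length v \<Longrightarrow> i < length u \<Longrightarrow> int_diff v u ! i = int (v ! i) - int (u ! i)"
  by (simp add: int_diff_def)

lemma insertions_int_diff:
  "length v = length u \<Longrightarrow> insertions (int_diff v u) = (\<Sum>i<length u. v ! i - u ! i)"
  by (simp add: insertions_def sum_list_sum_nth atLeast0LessThan nat_minus_as_int)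

lemma deletions_int_diff:
  "length v = length u \<Longrightarrow> deletions (int_diff v u) = (\<Sum>i<length u. u ! i - v ! i)"
  by (simp add: deletions_def sum_list_sum_nth atLeast0LessThan nat_minus_as_int)

lemma map2_add_int_diff:
  assumes "length v = length u" and "length u' = length u"
  shows "map2 (+) (int_diff v u) (int_diff u u') = int_diff v u'"
  by (rule nth_equalityI) (simp_all add: assms)

lemma int_diff_inject:
  assumes "int_diff v u = int_diff v' u" and "length v = length u" and "length v' = length u"
  shows "v = v'"
proof (rule nth_equalityI)
  fix i assume "i < length v"
  then show "v ! i = v' ! i"
    using arg_cong[OF assms(1), of "\<lambda>d. d ! i"] assms(2,3) by simp
qed (simp add: assms(2,3))

lemma length_runs_eq_if_Psi_eq: "fst (Psi y) = fst (Psi x) \<Longrightarrow> length (runs y) = length (runs x)"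
  by (drule arg_cong[where f = length]) (simp add: Psi_def)

lemma sticky_ball_iff:
  "y \<in> sticky_ball t s x \<longleftrightarrow>
     fst (Psi y) = fst (Psi x) \<and>
     int_diff (snd (Psi y)) (snd (Psi x)) \<in> edit_vectors (length (runs x)) t s"
proof (cases "fst (Psi y) = fst (Psi x)")
  case True
  have len: "length (snd (Psi y)) = length (runs x)" "length (snd (Psi x)) = length (runs x)"
    using length_runs_eq_if_Psi_eq[OF True] by (simp_all add: Psi_def)
  then have "insertions (int_diff (snd (Psi y)) (snd (Psi x))) =
      (\<Sum>i<length (runs x). snd (Psi y) ! i - snd (Psi x) ! i)"
    "deletions (int_diff (snd (Psi y)) (snd (Psi x))) =
      (\<Sum>i<length (runs x). snd (Psi x) ! i - snd (Psi y) ! i)"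
    by (simp_all add: insertions_int_diff deletions_int_diff)
  with True len show ?thesis
    unfolding sticky_ball_def edit_vectors_def mem_Collect_eq by (simp add: len conj_commute)
qed (simp add: sticky_ball_def)

lemma length_runs_if_in_sticky_ball: "y \<in> sticky_ball t s x \<Longrightarrow> length (runs y) = length (runs x)"
  by (rule length_runs_eq_if_Psi_eq) (simp add: sticky_ball_def)

lemma inj_on_sticky_ball: "inj_on (\<lambda>y. int_diff (snd (Psi y)) (snd (Psi x))) (sticky_ball t s x)"
proof (rule inj_onI)
  fix y y'
  assume y: "y \<in> sticky_ball t s x" and y': "y' \<in> sticky_ball t s x"
    and eq: "int_diff (snd (Psi y)) (snd (Psi x)) = int_diff (snd (Psi y')) (snd (Psi x))"
  have "length (snd (Psi y)) = length (snd (Psi x))" "length (snd (Psi y')) = length (snd (Psi x))"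
    using length_runs_if_in_sticky_ball[OF y] length_runs_if_in_sticky_ball[OF y']
    by (simp_all add: Psi_def)
  with eq have "snd (Psi y) = snd (Psi y')"
    by (rule int_diff_inject)
  moreover have "fst (Psi y) = fst (Psi y')"
    using y y' by (simp add: sticky_ball_iff)
  ultimately have "Psi y = Psi y'"
    by (simp add: prod_eq_iff)
  then show "y = y'"
    by (rule Psi_inject)
qed

lemma finite_sticky_ball: "finite (sticky_ball t s x)"
  by (rule inj_on_finite[OF inj_on_sticky_ball _ finite_edit_vectors[of "length (runs x)" t s]])
    (auto simp: sticky_ball_iff)

lemma exists_nth_int_diff_nonzero:
  assumes "x1 \<noteq> x2" and "fst (Psi x1) = fst (Psi x2)"
  shows "\<exists>k < length (runs x1). int_diff (snd (Psi x1)) (snd (Psi x2)) ! k \<noteq> 0"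
proof -
  have len: "length (snd (Psi x1)) = length (runs x1)" "length (snd (Psi x2)) = length (runs x1)"
    using length_runs_eq_if_Psi_eq[OF assms(2)] by (simp_all add: Psi_def)
  have "snd (Psi x1) \<noteq> snd (Psi x2)"
  proof
    assume "snd (Psi x1) = snd (Psi x2)"
    with assms(2) have "Psi x1 = Psi x2"
      by (simp add: prod_eq_iff)
    with assms(1) show False
      using Psi_inject by blast
  qed
  then show ?thesis
    using len by (auto simp: list_eq_iff_nth_eq)
qed

lemma int_diff_image_sticky_ball_inter:
  fixes t s :: nat
  assumes "fst (Psi x1) = fst (Psi x2)"
  defines "E \<equiv> edit_vectors (length (runs x1)) t s"
  shows "(\<lambda>y. int_diff (snd (Psi y)) (snd (Psi x1))) ` (sticky_ball t s x1 \<inter> sticky_ball t s x2)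
    \<subseteq> {d \<in> E. map2 (+) d (int_diff (snd (Psi x1)) (snd (Psi x2))) \<in> E}"
proof (rule image_subsetI)
  fix y assume "y \<in> sticky_ball t s x1 \<inter> sticky_ball t s x2"
  then have y1: "y \<in> sticky_ball t s x1" and y2: "y \<in> sticky_ball t s x2"
    by simp_all
  have "length (snd (Psi y)) = length (snd (Psi x1))" "length (snd (Psi x2)) = length (snd (Psi x1))"
    using length_runs_if_in_sticky_ball[OF y1] length_runs_eq_if_Psi_eq[OF assms(1)]
    by (simp_all add: Psi_def)
  then have "map2 (+) (int_diff (snd (Psi y)) (snd (Psi x1))) (int_diff (snd (Psi x1)) (snd (Psi x2))) =
      int_diff (snd (Psi y)) (snd (Psi x2))"
    by (rule map2_add_int_diff)
  with y1 y2 show "int_diff (snd (Psi y)) (snd (Psi x1))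
      \<in> {d \<in> E. map2 (+) d (int_diff (snd (Psi x1)) (snd (Psi x2))) \<in> E}"
    using length_runs_eq_if_Psi_eq[OF assms(1)] by (simp add: sticky_ball_iff E_def)
qed

lemma card_sticky_ball_inter_le:
  assumes "x1 \<noteq> x2" and r: "length (runs x1) = Suc n"
  shows "card (sticky_ball t s x1 \<inter> sticky_ball t s x2) \<le>
    card (edit_vectors (Suc n) t s) - card (edit_vectors n t s)"
proof (cases "fst (Psi x1) = fst (Psi x2)")
  case False
  then have "sticky_ball t s x1 \<inter> sticky_ball t s x2 = {}"
    by (auto simp: sticky_ball_iff)
  then show ?thesis by simp
next
  case True
  define E where "E = edit_vectors (Suc n) t s"
  define w where "w = int_diff (snd (Psi x1)) (snd (Psi x2))"
  obtain k where k: "k < Suc n" "w ! k \<noteq> 0"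
    using exists_nth_int_diff_nonzero[OF assms(1) True] r by (auto simp: w_def)
  have "length w = Suc n"
    using r length_runs_eq_if_Psi_eq[OF True] by (simp add: w_def Psi_def)
  have "card (sticky_ball t s x1 \<inter> sticky_ball t s x2) \<le> card {d \<in> E. map2 (+) d w \<in> E}"
    unfolding E_def w_def r[symmetric]
    using inj_on_subset[OF inj_on_sticky_ball[of x1 t s] Int_lower1]
      int_diff_image_sticky_ball_inter[OF True, of t s]
    by (rule card_inj_on_le) (simp add: finite_edit_vectors)
  also have "\<dots> \<le> card E - card (edit_vectors n t s)"
    unfolding E_def by (rule card_edit_vectors_shift_le[OF \<open>length w = Suc n\<close> k])
  finally show ?thesis
    by (simp add: E_def)
qed

section \<open>The extremal pair\<close>

definition alternating_string :: "nat list \<Rightarrow> nat list" where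
  "alternating_string v = of_runs (zip (map (\<lambda>i. i mod 2) [0..<length v]) v)"

lemma Psi_alternating_string:
  assumes "0 \<notin> set v"
  shows "Psi (alternating_string v) = (map (\<lambda>i. i mod 2) [0..<length v], v)"
proof -
  have "runs (alternating_string v) = zip (map (\<lambda>i. i mod 2) [0..<length v]) v"
    unfolding alternating_string_def
  proof (rule runs_of_runs)
    show "distinct_adj (map fst (zip (map (\<lambda>i. i mod 2) [0..<length v]) v))"
      by (auto simp: distinct_adj_conv_nth mod_Suc)
    show "\<forall>p\<in>set (zip (map (\<lambda>i. i mod 2) [0..<length v]) v). 0 < snd p"
      using assms by (metis gr0I prod.collapse set_zip_rightD)
  qed
  then show ?thesis
    by (simp add: Psi_def)
qed

lemma length_runs_alternating_string: "0 \<notin> set v \<Longrightarrow> length (runs (alternating_string v)) = length v"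
  using arg_cong[OF Psi_alternating_string, of v "\<lambda>p. length (snd p)"] by (simp add: Psi_def)

lemma alternating_string_inject:
  assumes "alternating_string v = alternating_string u" and "0 \<notin> set v" and "0 \<notin> set u"
  shows "v = u"
proof -
  have "snd (Psi (alternating_string v)) = snd (Psi (alternating_string u))"
    using assms(1) by (rule arg_cong)
  then show ?thesis
    unfolding Psi_alternating_string[OF assms(2)] Psi_alternating_string[OF assms(3)] by simp
qed

lemma alternating_string_in_J_star:
  assumes "2 \<le> q" and "0 \<notin> set v"
  shows "alternating_string v \<in> J_star q (length v)"
proof -
  have "set (alternating_string v) \<subseteq> fst ` set (zip (map (\<lambda>i. i mod 2) [0..<length v]) v)"
    unfolding alternating_string_def by (rule set_of_runs)
  also have "\<dots> \<subseteq> {..<q}"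
    using assms(1) by (force dest: set_zip_leftD)
  finally show ?thesis
    using length_runs_alternating_string[OF assms(2)] by (simp add: J_star_def Sigma_star_def)
qed

lemma alternating_string_in_sticky_ball_iff:
  assumes "0 \<notin> set v" and "0 \<notin> set u" and "length v = length u"
  shows "alternating_string v \<in> sticky_ball t s (alternating_string u) \<longleftrightarrow>
    int_diff v u \<in> edit_vectors (length u) t s"
  using assms by (simp add: sticky_ball_iff Psi_alternating_string length_runs_alternating_string)

lemma int_diff_add_edit_vector:
  assumes "d \<in> edit_vectors (length u) t s" and "\<forall>a\<in>set u. s < a"
  defines "v \<equiv> map2 (\<lambda>a b. nat (int a + b)) u d"
  shows "length v = length u" and "0 \<notin> set v" and "int_diff v u = d"
proof -
  have len: "length d = length u"
    using assms(1) by (simp add: edit_vectors_def)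
  have pos: "0 < int (u ! i) + d ! i" if "i < length u" for i
  proof -
    have "- int s \<le> d ! i"
      using edit_vectors_entry_bounds(1)[OF assms(1) nth_mem] that len by simp
    moreover have "s < u ! i"
      using assms(2) that by simp
    ultimately show ?thesis
      by linarith
  qed
  show "length v = length u"
    using len by (simp add: v_def)
  then have v_nth: "int (v ! i) = int (u ! i) + d ! i" if "i < length u" for i
    using that len pos[OF that] by (simp add: v_def)
  show "0 \<notin> set v"
  proof
    assume "0 \<in> set v"
    then obtain i where "i < length u" "v ! i = 0"
      using \<open>length v = length u\<close> by (auto simp: in_set_conv_nth)
    then show False
      using pos v_nth by fastforce
  qed
  show "int_diff v u = d"
    using v_nth \<open>length v = length u\<close> len by (simp add: list_eq_iff_nth_eq)
qed

lemma exists_sticky_ball_inter_ge: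
  assumes "2 \<le> q"
  shows "\<exists>x1 x2. x1 \<in> J_star q (Suc n) \<and> x2 \<in> J_star q (Suc n) \<and> x1 \<noteq> x2 \<and>
    card (edit_vectors (Suc n) t s) - card (edit_vectors n t s) \<le>
    card (sticky_ball t s x1 \<inter> sticky_ball t s x2)"
proof -
  define u1 where "u1 = (s + 2) # replicate n (s + 1)"
  define u2 where "u2 = replicate (Suc n) (s + 1)"
  define E where "E = edit_vectors (Suc n) t s"
  define G where "G = {d \<in> E. map2 (+) d (1 # replicate n 0) \<in> E}"
  define v where "v d = map2 (\<lambda>a b. nat (int a + b)) u1 d" for d
  have u: "length u1 = Suc n" "length u2 = Suc n" "0 \<notin> set u1" "0 \<notin> set u2" "\<forall>a\<in>set u1. s < a"
    by (auto simp: u1_def u2_def)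
  have v: "length (v d) = Suc n" "0 \<notin> set (v d)" "int_diff (v d) u1 = d" if "d \<in> E" for d
    using int_diff_add_edit_vector[of d u1 t s] that u by (simp_all add: v_def E_def)
  have "int_diff u1 u2 = 1 # replicate n 0"
    by (simp add: u1_def u2_def int_diff_def zip_replicate comp_def)
  have "alternating_string (v d) \<in>
      sticky_ball t s (alternating_string u1) \<inter> sticky_ball t s (alternating_string u2)"
    if "d \<in> G" for d
  proof -
    have "d \<in> E" and "map2 (+) d (1 # replicate n 0) \<in> E"
      using that by (simp_all add: G_def)
    moreover have "map2 (+) d (1 # replicate n 0) = int_diff (v d) u2"
      using map2_add_int_diff[of "v d" u1 u2] u v[OF \<open>d \<in> E\<close>] \<open>int_diff u1 u2 = 1 # replicate n 0\<close>
      by simp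
    ultimately show ?thesis
      using u v[OF \<open>d \<in> E\<close>] by (simp add: E_def alternating_string_in_sticky_ball_iff)
  qed
  moreover have "inj_on (\<lambda>d. alternating_string (v d)) G"
    by (rule inj_on_inverseI[where g = "\<lambda>y. int_diff (snd (Psi y)) u1"])
      (simp add: G_def v Psi_alternating_string)
  ultimately have "card G \<le>
      card (sticky_ball t s (alternating_string u1) \<inter> sticky_ball t s (alternating_string u2))"
    by (intro card_inj_on_le) (auto simp: finite_sticky_ball)
  moreover have "card G = card E - card (edit_vectors n t s)"
    unfolding G_def E_def by (rule card_edit_vectors_shift_unit)
  moreover have "alternating_string u1 \<noteq> alternating_string u2"
    using alternating_string_inject[OF _ u(3,4)] by (auto simp: u1_def u2_def)
  ultimately show ?thesis
    using alternating_string_in_J_star[OF assms u(3)] alternating_string_in_J_star[OF assms u(4)] u(1,2)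
    unfolding E_def by (intro exI[of _ "alternating_string u1"] exI[of _ "alternating_string u2"]) simp
qed

lemma Max_card_sticky_ball_inter:
  assumes "2 \<le> q"
  shows "Max {card (sticky_ball t s x1 \<inter> sticky_ball t s x2) | x1 x2.
      x1 \<in> J_star q (Suc n) \<and> x2 \<in> J_star q (Suc n) \<and> x1 \<noteq> x2} =
    card (edit_vectors (Suc n) t s) - card (edit_vectors n t s)"
    (is "Max ?S = ?K")
proof (rule Max_eqI)
  have "k \<le> ?K" if "k \<in> ?S" for k
    using that card_sticky_ball_inter_le by (auto simp: J_star_def)
  then show "finite ?S" and "\<And>k. k \<in> ?S \<Longrightarrow> k \<le> ?K"
    by (auto intro: finite_subset[of _ "{..?K}"])
  then show "?K \<in> ?S"
    using exists_sticky_ball_inter_ge[OF assms, of n t s] by (blast intro: le_antisym)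
qed

theorem theorem1:
  fixes q r t s :: nat
  assumes "q \<ge> 2" and "r \<ge> 2"
  shows "Max {card (sticky_ball t s x1 \<inter> sticky_ball t s x2) | x1 x2.
              x1 \<in> J_star q r \<and> x2 \<in> J_star q r \<and> x1 \<noteq> x2} + 1
         = (\<Sum>i=1..t. A (t - i) s (r - 1)) + (\<Sum>i=1..s. A t (s - i) (r - 1)) + 1"
proof -
  obtain n where r: "r = Suc (Suc n)"
    using assms(2) by (metis add_2_eq_Suc le_Suc_ex)
  have "card (edit_vectors r t s) - card (edit_vectors (r - 1) t s) =
      (\<Sum>i=1..t. A (t - i) s (r - 1)) + (\<Sum>i=1..s. A t (s - i) (r - 1))"
    unfolding r by (simp only: card_edit_vectors A.simps diff_Suc_1)
  with Max_card_sticky_ball_inter[OF assms(1), of t s "r - 1"] show ?thesis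
    by (simp add: r)
qed

end
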